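(* There exists a universal constant $C>0$ with the following property. For every $N$, every (deterministic) $N\times N$ hermitian matrix $H$ and every $z=E+i\eta$ with $\eta>0$, the following hold, where $\Lambda=\Lambda(z)$ and $R=R(z)$ are as defined below. If $|E|\le 2+\eta$, then \[ |\Lambda|\le C\min\Big\{\frac{|R|}{|m_{sc}^2-1|},\sqrt{|R|}\Big\}. \] For all $E\in\mathbb R$, \[ |\operatorname{Im}\Lambda|\le C\min\Big\{\frac{|R|}{|m_{sc}^2-1|},\sqrt{|R|}\Big\} \qquad\text{and}\qquad \min\big(|\Lambda|,|\Lambda+2m_{sc}+z|\big)\le C\sqrt{|R|}. \]
   Context: Resolvent and Stieltjes transforms: $G=G(z)=(H-z)^{-1}$ and $m=\frac1N\operatorname{Tr}G$. Let $\rho_{sc}(x)=\frac{1}{2\pi}\sqrt{4-x^2}$ for $|x|\le 2$ and $\rho_{sc}(x)=0$ otherwise, and $m_{sc}(z)=\int\frac{\rho_{sc}(x)}{x-z}\,dx$. Set $\Lambda=m-m_{sc}$. Minors: $G^{(j)}=(H^{(j)}-z)^{-1}$, where $H^{(j)}$ is $H$ with its $j$-th row and column removed. Column vectors: $\mathbf a_j\in\mathbb C^{N-1}$ is the $j$-th column of $H$ without its diagonal entry, indexed by $\{1,\dots,N\}\setminus\{j\}$. Thus $\mathbf a_j^*G^{(j)}\mathbf a_j=\sum_{k,l\ne j}h_{jk}G^{(j)}_{kl}h_{lj}$. $\mathbb E_j$: expectation with respect to the entries $(h_{kj})_{k\neq j}$ only, all other entries held fixed. When $H$ is deterministic, $\mathbb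 E_j$ is understood as the corresponding functional of a random Wigner matrix, i.e. $\mathbb E_j\,\mathbf a_j^*G^{(j)}\mathbf a_j=\frac1N\sum_{k\ne j}G^{(j)}_{kk}$. The error terms: set \[ \Upsilon_j=-h_{jj}-\frac{1}{G_{jj}}\frac1N\sum_kG_{jk}G_{kj}+\mathbf a_j^*G^{(j)}\mathbf a_j-\frac1N\sum_{k\ne j}G^{(j)}_{kk} \] and $R=\frac1N\sum_{j=1}^N\Upsilon_jG_{jj}$. With these definitions $\Lambda^2+(2m_{sc}+z)\Lambda+R=0$, and $\operatorname{Im}\Lambda>-\operatorname{Im}m_{sc}$. *)

theory Defs
  imports "HOL-Analysis.Analysis"
begin

text \<open>Matrices are functions nat => nat => complex; an N x N matrix uses the
indices {..<N} (i.e. 0,...,N-1 instead of 1,...,N).\<close>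

definition hermitian_mat :: "nat \<Rightarrow> (nat \<Rightarrow> nat \<Rightarrow> complex) \<Rightarrow> bool" where
  "hermitian_mat N H \<longleftrightarrow> (\<forall>i<N. \<forall>k<N. H k i = cnj (H i k))"

text \<open>Resolvent (H_I - z)^{-1} of the principal submatrix of H on the finite
index set I, as a matrix indexed by I (and zero outside I).\<close>
definition resolvent_on :: "(nat \<Rightarrow> nat \<Rightarrow> complex) \<Rightarrow> nat set \<Rightarrow> complex \<Rightarrow> (nat \<Rightarrow> nat \<Rightarrow> complex)" where
  "resolvent_on H I z = (THE G.
      (\<forall>i\<in>I. \<forall>k\<in>I. (\<Sum>l\<in>I. (H i l - (if i = l then z else 0)) * G l k) = (if i = k then 1 else 0))
    \<and> (\<forall>i k. i \<notin> I \<or> k \<notin> I \<longrightarrow> G i k = 0))"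

definition res :: "nat \<Rightarrow> (nat \<Rightarrow> nat \<Rightarrow> complex) \<Rightarrow> complex \<Rightarrow> (nat \<Rightarrow> nat \<Rightarrow> complex)" where
  "res N H z = resolvent_on H {..<N} z"

text \<open>G^{(j)}: resolvent of H with the j-th row and column removed (keeps original indices).\<close>
definition res_minor :: "nat \<Rightarrow> (nat \<Rightarrow> nat \<Rightarrow> complex) \<Rightarrow> nat \<Rightarrow> complex \<Rightarrow> (nat \<Rightarrow> nat \<Rightarrow> complex)" where
  "res_minor N H j z = resolvent_on H ({..<N} - {j}) z"

definition stieltjes :: "nat \<Rightarrow> (nat \<Rightarrow> nat \<Rightarrow> complex) \<Rightarrow> complex \<Rightarrow> complex" where
  "stieltjes N H z = (1 / of_nat N) * (\<Sum>j<N. res N H z j j)"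

definition rho_sc :: "real \<Rightarrow> real" where
  "rho_sc x = (if \<bar>x\<bar> \<le> 2 then sqrt (4 - x^2) / (2 * pi) else 0)"

definition m_sc :: "complex \<Rightarrow> complex" where
  "m_sc z = integral UNIV (\<lambda>x::real. complex_of_real (rho_sc x) / (complex_of_real x - z))"

definition Lambda :: "nat \<Rightarrow> (nat \<Rightarrow> nat \<Rightarrow> complex) \<Rightarrow> complex \<Rightarrow> complex" where
  "Lambda N H z = stieltjes N H z - m_sc z"

definition Upsilon :: "nat \<Rightarrow> (nat \<Rightarrow> nat \<Rightarrow> complex) \<Rightarrow> complex \<Rightarrow> nat \<Rightarrow> complex" where
  "Upsilon N H z j =
     - H j j
     - (1 / res N H z j j) * ((1 / of_nat N) * (\<Sum>k<N. res N H z j k * res N H z k j))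
     + (\<Sum>k\<in>{..<N} - {j}. \<Sum>l\<in>{..<N} - {j}. H j k * res_minor N H j z k l * H l j)
     - (1 / of_nat N) * (\<Sum>k\<in>{..<N} - {j}. res_minor N H j z k k)"

definition R_err :: "nat \<Rightarrow> (nat \<Rightarrow> nat \<Rightarrow> complex) \<Rightarrow> complex \<Rightarrow> complex" where
  "R_err N H z = (1 / of_nat N) * (\<Sum>j<N. Upsilon N H z j * res N H z j j)"

end

theory Submission
  imports Defs
begin

(* The proof is deterministic and has three ingredients.
   1. The semicircle transform m_sc(z) is the root of s^2 + z s + 1 = 0 lying in
      the unit disc; we compute the defining integral via x = -2 cos t and an
      explicit primitive, and deduce Im m_sc > 0.
   2. Resolvents on finite index sets: for Hermitian H and Im z > 0 the
      resolvent exists and is unique (existence by induction on the index set,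
      adding one index at a time via the Schur complement formula).  The same
      formula expresses G_jj and G_kk - G^(j)_kk through the minor G^(j); this
      turns the error term into  Upsilon_j = -z - 1/G_jj - m,  hence
      R = -(m^2 + z m + 1), and also gives Im m > 0.
   3. A purely algebraic stability estimate: if s is the root in the unit disc
      and Im m > 0, then with L = m - s and b = 2 s + z we have
      m^2 + z m + 1 = L (L + b) and s^2 - 1 = s b, the factor L + b stays away
      from 0, and in the bulk |b| is controlled by |L + b|.  This yields all
      three inequalities with C = 8.
   The theorem follows by applying 3 to m = stieltjes and s = m_sc. *)

lemma root_geometry:
  fixes s z :: complex
  assumes root: "s\<^sup>2 + z * s + 1 = 0"
  shows "z = - s - 1 / s" and "s\<^sup>2 - 1 = s * (2 * s + z)"
    and "Re (1 / s) = Re s / (cmod s)\<^sup>2" and "Im (1 / s) = - Im s / (cmod s)\<^sup>2"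
proof -
  have "s \<noteq> 0" using root by auto
  then show "z = - s - 1 / s" using root by (simp add: field_simps power2_eq_square) algebra
  show "s\<^sup>2 - 1 = s * (2 * s + z)" using root unfolding power2_eq_square by algebra
  show "Re (1 / s) = Re s / (cmod s)\<^sup>2" "Im (1 / s) = - Im s / (cmod s)\<^sup>2"
    by (simp_all add: Re_divide' Im_divide')
qed

(* For Im z > 0 one of the two roots (with product 1) lies strictly inside the
   unit disc: otherwise both lie on the unit circle and z would be real. *)
lemma quadratic_root_in_disc:
  assumes iz: "Im z > 0"
  shows "\<exists>\<alpha>. \<alpha>\<^sup>2 + z * \<alpha> + 1 = 0 \<and> cmod \<alpha> < 1"
proof (rule ccontr)
  assume no_root: "\<nexists>\<alpha>. \<alpha>\<^sup>2 + z * \<alpha> + 1 = 0 \<and> cmod \<alpha> < 1"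
  define w where "w = csqrt (z\<^sup>2 - 4)"
  define a1 where "a1 = (- z + w) / 2"
  define a2 where "a2 = (- z - w) / 2"
  have w2: "w\<^sup>2 = z\<^sup>2 - 4" unfolding w_def by simp
  have roots: "a1\<^sup>2 + z * a1 + 1 = 0" "a2\<^sup>2 + z * a2 + 1 = 0"
    unfolding a1_def a2_def using w2 unfolding power2_eq_square by (simp_all add: field_simps) algebra
  have prod: "a1 * a2 = 1" unfolding a1_def a2_def using w2 unfolding power2_eq_square
    by (simp add: field_simps)
  have n1: "cmod a1 \<ge> 1" and n2: "cmod a2 \<ge> 1" using no_root roots by auto
  have "cmod a1 * cmod a2 = 1" using prod by (metis norm_mult norm_one)
  moreover have "cmod a1 * 1 \<le> cmod a1 * cmod a2" using n2 by (intro mult_left_mono) auto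
  ultimately have "cmod a1 = 1" using n1 by simp
  \<comment> \<open>A root on the unit circle has inverse \<open>cnj a1\<close>, so \<open>a2 = cnj a1\<close> and \<open>z = - (a1 + a2)\<close> is real.\<close>
  then have "a1 * cnj a1 = 1" using complex_norm_square[of a1] by simp
  then have "a1 * cnj a1 = a1 * a2" using prod by simp
  moreover have "a1 \<noteq> 0" using prod by auto
  ultimately have "a2 = cnj a1" by simp
  moreover have "z = - (a1 + a2)" unfolding a1_def a2_def by (simp add: field_simps)
  ultimately show False using iz by simp
qed

(* Keeps the logarithms in the primitive below off the branch cut. *)
lemma Re_one_minus_disc_times_circle:
  fixes a v :: complex
  assumes "cmod a < 1" "cmod v = 1"
  shows "Re (1 - a * v) > 0"
proof -
  have "Re (a * v) \<le> cmod (a * v)" by (rule complex_Re_le_cmod)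
  also have "\<dots> < 1" using assms by (simp add: norm_mult)
  finally show ?thesis by simp
qed

(* A primitive of 1/(-2 cos w - z), where alpha, beta are the roots of
   s^2 + z s + 1 and |alpha| < 1. *)
definition sc_primitive :: "complex \<Rightarrow> complex \<Rightarrow> complex \<Rightarrow> complex" where
  "sc_primitive \<alpha> \<beta> w =
     -(1 / (\<alpha> - \<beta>)) * (w - \<i> * (Ln (1 - \<alpha> * exp (-(\<i> * w))) - Ln (1 - \<alpha> * exp (\<i> * w))))"

lemma sc_primitive_deriv:
  fixes \<alpha> \<beta> z :: complex and t :: real
  assumes a1: "cmod \<alpha> < 1" and ab: "\<alpha> * \<beta> = 1" and sab: "\<alpha> + \<beta> = - z" and anb: "\<alpha> \<noteq> \<beta>"
    and den: "- 2 * cos (of_real t) - z \<noteq> 0"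
  shows "(sc_primitive \<alpha> \<beta> has_field_derivative (1 / (- 2 * cos (of_real t) - z))) (at (of_real t))"
proof -
  define u where "u = exp (\<i> * of_real t)"
  define v where "v = exp (-(\<i> * of_real t))"
  have uv: "u * v = 1" unfolding u_def v_def by (simp add: exp_minus)
  have cos_uv: "cos (complex_of_real t) = (u + v) / 2" unfolding u_def v_def by (simp add: cos_exp_eq)
  have "cmod u = 1" "cmod v = 1" unfolding u_def v_def by (simp_all add: norm_exp_eq_Re)
  then have Re_u: "Re (1 - \<alpha> * u) > 0" and Re_v: "Re (1 - \<alpha> * v) > 0"
    using Re_one_minus_disc_times_circle[OF a1] by blast+
  then have slit: "1 - \<alpha> * u \<notin> \<real>\<^sub>\<le>\<^sub>0" "1 - \<alpha> * v \<notin> \<real>\<^sub>\<le>\<^sub>0"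
    by (auto simp: complex_nonpos_Reals_iff)
  have nz_u: "1 - \<alpha> * u \<noteq> 0" and nz_v: "1 - \<alpha> * v \<noteq> 0"
    using Re_u Re_v by (metis less_irrefl zero_complex.sel(1))+
  have amb: "\<alpha> - \<beta> \<noteq> 0" using anb by simp
  have den_eq: "- 2 * cos (complex_of_real t) - z = - u - v - z" unfolding cos_uv by simp
  then have den_uv: "- u - v - z \<noteq> 0" using den by simp
  have \<beta>_eq: "\<beta> = - z - \<alpha>" using sab by (simp add: algebra_simps)
  have key: "- ((1 - (inverse (1 - \<alpha> * v) * (v * \<i> * \<alpha>) + inverse (1 - \<alpha> * u) * (u * \<i> * \<alpha>)) * \<i>)
               / (\<alpha> - \<beta>)) = 1 / (- 2 * cos (complex_of_real t) - z)"
  proof -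
    define p where "p = inverse (1 - \<alpha> * v)"
    define q where "q = inverse (1 - \<alpha> * u)"
    have hp: "p * (1 - \<alpha> * v) = 1" using nz_v unfolding p_def by simp
    have hq: "q * (1 - \<alpha> * u) = 1" using nz_u unfolding q_def by simp
    have "- ((1 - (p * (v * \<i> * \<alpha>) + q * (u * \<i> * \<alpha>)) * \<i>)) * (- u - v - z) = \<alpha> - \<beta>"
      using hp hq uv ab \<beta>_eq complex_i_mult_minus[of 1] by algebra
    then show ?thesis unfolding p_def[symmetric] q_def[symmetric] den_eq
      using den_uv amb by (simp add: field_simps)
  qed
  show ?thesis
    unfolding sc_primitive_def
    using slit nz_u nz_v amb den
    apply (auto intro!: derivative_eq_intros has_field_derivative_Ln[THEN DERIV_chain2]
                simp: u_def v_def)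
    using key unfolding u_def v_def by simp
qed

lemma cos_minus_nonzero:
  assumes "Im z > 0"
  shows "- 2 * cos (complex_of_real t) - z \<noteq> 0"
proof
  assume "- 2 * cos (complex_of_real t) - z = 0"
  then have "Im (- 2 * cos (complex_of_real t) - z) = 0" by simp
  then show False using assms by (simp add: cos_of_real)
qed

(* The integrand defining m_sc on [-2, 2], and the integrand obtained after
   the substitution x = -2 cos t. *)
definition sc_integrand :: "complex \<Rightarrow> real \<Rightarrow> complex" where
  "sc_integrand z x = complex_of_real (sqrt (4 - x\<^sup>2) / (2 * pi)) / (complex_of_real x - z)"

definition sc_angle_integrand :: "complex \<Rightarrow> real \<Rightarrow> complex" where
  "sc_angle_integrand z t = 1 / (2 * complex_of_real pi) *
     ((4 - z\<^sup>2) / (- 2 * cos (complex_of_real t) - z) + 2 * cos (complex_of_real t) - z)"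

lemma sc_integrand_subst:
  assumes iz: "Im z > 0" and t: "t \<in> {0..pi}"
  shows "(2 * sin t) *\<^sub>R sc_integrand z (- 2 * cos t) = sc_angle_integrand z t"
proof -
  define S where "S = complex_of_real (sin t)"
  define C where "C = complex_of_real (cos t)"
  have "sin t \<ge> 0" using t by (auto intro: sin_ge_zero)
  moreover have "4 - (- 2 * cos t)\<^sup>2 = (2 * sin t)\<^sup>2"
    using sin_cos_squared_add[of t] unfolding power2_eq_square by algebra
  ultimately have sqrt_eq: "sqrt (4 - (- 2 * cos t)\<^sup>2) = 2 * sin t" by (simp only: real_sqrt_abs)
  have SC: "S * S = 1 - C * C"
    using sin_squared_eq[of t] unfolding S_def C_def power2_eq_square
    by (metis of_real_1 of_real_diff of_real_mult)
  have den: "- 2 * C - z \<noteq> 0" using cos_minus_nonzero[OF iz, of t] by (simp add: C_def cos_of_real)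
  have "(2 * sin t) *\<^sub>R sc_integrand z (- 2 * cos t) = 4 * S * S / (2 * complex_of_real pi) / (- 2 * C - z)"
    unfolding sc_integrand_def sqrt_eq S_def C_def by (simp add: scaleR_conv_of_real)
  also have "\<dots> = 1 / (2 * complex_of_real pi) * ((4 - z\<^sup>2 + (2 * C - z) * (- 2 * C - z)) / (- 2 * C - z))"
  proof -
    have "4 - z\<^sup>2 + (2 * C - z) * (- 2 * C - z) = 4 * S * S"
      using SC unfolding power2_eq_square by algebra
    then show ?thesis by simp
  qed
  also have "\<dots> = sc_angle_integrand z t"
    unfolding sc_angle_integrand_def C_def[symmetric] cos_of_real using den
    by (simp add: field_simps)
  finally show ?thesis .
qed

lemma sc_angle_integral:
  assumes iz: "Im z > 0" and root: "\<alpha>\<^sup>2 + z * \<alpha> + 1 = 0" and a1: "cmod \<alpha> < 1"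
  shows "(sc_angle_integrand z has_integral \<alpha>) {0..pi}"
proof -
  define \<beta> where "\<beta> = - z - \<alpha>"
  have sab: "\<alpha> + \<beta> = - z" unfolding \<beta>_def by simp
  have ab: "\<alpha> * \<beta> = 1" using root unfolding \<beta>_def power2_eq_square by algebra
  have z2: "z\<^sup>2 - 4 = (\<alpha> - \<beta>) * (\<alpha> - \<beta>)"
    using ab sab unfolding power2_eq_square by algebra
  have anb: "\<alpha> \<noteq> \<beta>"
  proof
    assume "\<alpha> = \<beta>"
    then have "z\<^sup>2 = 4" using z2 by simp
    then have "z = 2 \<or> z = -2"
      by (metis power2_eq_square square_eq_iff numeral_times_numeral semiring_norm(12,13))
    then show False using iz by auto
  qed
  define \<Phi> where "\<Phi> w = 1 / (2 * complex_of_real pi) * ((4 - z\<^sup>2) * sc_primitive \<alpha> \<beta> w + 2 * sin w - z * w)" for w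
  have d\<Phi>: "(\<Phi> has_field_derivative sc_angle_integrand z t) (at (complex_of_real t))" for t
  proof -
    have "((\<lambda>w. (4 - z\<^sup>2) * sc_primitive \<alpha> \<beta> w + 2 * sin w - z * w) has_field_derivative
           (4 - z\<^sup>2) * (1 / (- 2 * cos (complex_of_real t) - z)) + 2 * cos (complex_of_real t) - z)
          (at (complex_of_real t))"
      by (auto intro!: derivative_eq_intros
          sc_primitive_deriv[OF a1 ab sab anb cos_minus_nonzero[OF iz]])
    from DERIV_cmult[OF this, of "1 / (2 * complex_of_real pi)"] show ?thesis
      unfolding \<Phi>_def sc_angle_integrand_def by simp
  qed
  then have "(sc_angle_integrand z has_integral (\<Phi> (of_real pi) - \<Phi> (of_real 0))) {0..pi}"
    using fundamental_theorem_of_calculus[of 0 pi "\<lambda>x. \<Phi> (of_real x)" "sc_angle_integrand z"]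
      has_vector_derivative_real_field[OF d\<Phi>] by simp
  moreover have "\<Phi> (of_real pi) - \<Phi> (of_real 0) = \<alpha>"
  proof -
    have "sc_primitive \<alpha> \<beta> (of_real pi) = - (of_real pi / (\<alpha> - \<beta>))" "sc_primitive \<alpha> \<beta> 0 = 0"
      unfolding sc_primitive_def by (simp_all add: exp_minus)
    then have "\<Phi> (of_real pi) - \<Phi> (of_real 0)
        = 1 / (2 * complex_of_real pi) * ((4 - z\<^sup>2) * (- (of_real pi / (\<alpha> - \<beta>))) - z * of_real pi)"
      unfolding \<Phi>_def by simp
    also have "\<dots> = ((z\<^sup>2 - 4) / (\<alpha> - \<beta>) - z) / 2"
      using anb by (simp add: field_simps)
    also have "\<dots> = \<alpha>"
    proof -
      have "(\<alpha> - \<beta>) * (\<alpha> - \<beta>) / (\<alpha> - \<beta>) = \<alpha> - \<beta>" using anb by simp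
      moreover have "z = - \<alpha> - \<beta>" using sab by (metis add_uminus_conv_diff minus_add_distrib minus_minus)
      ultimately show ?thesis unfolding z2 by simp
    qed
    finally show ?thesis .
  qed
  ultimately show ?thesis by simp
qed

lemma m_sc_eq_root:
  assumes iz: "Im z > 0" and root: "\<alpha>\<^sup>2 + z * \<alpha> + 1 = 0" and a1: "cmod \<alpha> < 1"
  shows "m_sc z = \<alpha>"
proof -
  have "complex_of_real x - z \<noteq> 0" for x
    using iz by (metis Im_complex_of_real eq_iff_diff_eq_0 less_irrefl)
  then have cont: "continuous_on {-2..2} (sc_integrand z)"
    unfolding sc_integrand_def by (intro continuous_intros) auto
  have "((\<lambda>t. (2 * sin t) *\<^sub>R sc_integrand z (- 2 * cos t)) has_integral
          integral {- 2 * cos 0 .. - 2 * cos pi} (sc_integrand z)) {0..pi}"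
    by (rule has_integral_substitution[of 0 pi "\<lambda>t. - 2 * cos t" "-2" 2])
       (auto intro!: derivative_eq_intros cont simp: cos_ge_minus_one, smt (verit) cos_ge_minus_one)
  then have "((\<lambda>t. (2 * sin t) *\<^sub>R sc_integrand z (- 2 * cos t)) has_integral
          integral {-2..2} (sc_integrand z)) {0..pi}"
    by simp
  then have "(sc_angle_integrand z has_integral integral {-2..2} (sc_integrand z)) {0..pi}"
    by (rule has_integral_eq[rotated]) (rule sc_integrand_subst[OF iz])
  then have "integral {-2..2} (sc_integrand z) = \<alpha>"
    using sc_angle_integral[OF iz root a1] by (rule has_integral_unique)
  then have "(sc_integrand z has_integral \<alpha>) {-2..2}"
    using integrable_continuous_real[OF cont] by (metis has_integral_integral)
  then have "((\<lambda>x. if x \<in> {-2..2} then sc_integrand z x else 0) has_integral \<alpha>) UNIV"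
    by (simp only: has_integral_restrict_UNIV)
  moreover have "(\<lambda>x. if x \<in> {-2..2} then sc_integrand z x else 0)
      = (\<lambda>x. complex_of_real (rho_sc x) / (complex_of_real x - z))"
    by (auto simp: sc_integrand_def rho_sc_def abs_le_iff)
  ultimately show ?thesis unfolding m_sc_def by (simp add: integral_unique)
qed

lemma m_sc_props:
  assumes iz: "Im z > 0"
  shows "(m_sc z)\<^sup>2 + z * m_sc z + 1 = 0" and "cmod (m_sc z) < 1" and "Im (m_sc z) > 0"
proof -
  obtain \<alpha> where root: "\<alpha>\<^sup>2 + z * \<alpha> + 1 = 0" and a1: "cmod \<alpha> < 1"
    using quadratic_root_in_disc[OF iz] by blast
  have m_eq: "m_sc z = \<alpha>" by (rule m_sc_eq_root[OF iz root a1])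
  then show "(m_sc z)\<^sup>2 + z * m_sc z + 1 = 0" "cmod (m_sc z) < 1" using root a1 by simp_all
  note geo = root_geometry[OF root]
  have "\<alpha> \<noteq> 0" using root by auto
  then have rho: "0 < (cmod \<alpha>)\<^sup>2" "(cmod \<alpha>)\<^sup>2 < 1" using a1 by (simp_all add: abs_square_less_1)
  \<comment> \<open>From \<open>z = - \<alpha> - 1/\<alpha>\<close>: \<open>Im z = Im \<alpha> (1 / |\<alpha>|\<^sup>2 - 1)\<close> with a positive second factor.\<close>
  have "Im z = Im \<alpha> * (1 / (cmod \<alpha>)\<^sup>2 - 1)"
    unfolding geo(1) using geo(4) by (simp add: algebra_simps)
  moreover have "1 / (cmod \<alpha>)\<^sup>2 - 1 > 0" using rho by simp
  ultimately have "Im \<alpha> > 0" using iz by (simp add: zero_less_mult_iff)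
  then show "Im (m_sc z) > 0" using m_eq by simp
qed

definition is_resolvent_on :: "(nat \<Rightarrow> nat \<Rightarrow> complex) \<Rightarrow> nat set \<Rightarrow> complex \<Rightarrow> (nat \<Rightarrow> nat \<Rightarrow> complex) \<Rightarrow> bool" where
  "is_resolvent_on H I z G \<longleftrightarrow>
     (\<forall>i\<in>I. \<forall>k\<in>I. (\<Sum>l\<in>I. (H i l - (if i = l then z else 0)) * G l k) = (if i = k then 1 else 0))
   \<and> (\<forall>i k. i \<notin> I \<or> k \<notin> I \<longrightarrow> G i k = 0)"

definition hermitian_on :: "(nat \<Rightarrow> nat \<Rightarrow> complex) \<Rightarrow> nat set \<Rightarrow> bool" where
  "hermitian_on H I \<longleftrightarrow> (\<forall>i\<in>I. \<forall>k\<in>I. H k i = cnj (H i k))"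

lemma resolvent_on_eq_The: "resolvent_on H I z = (THE G. is_resolvent_on H I z G)"
  unfolding resolvent_on_def is_resolvent_on_def ..

lemma hermitian_mat_imp_hermitian_on: "hermitian_mat N H \<Longrightarrow> hermitian_on H {..<N}"
  unfolding hermitian_mat_def hermitian_on_def by blast

lemma hermitian_on_subset: "hermitian_on H I \<Longrightarrow> F \<subseteq> I \<Longrightarrow> hermitian_on H F"
  unfolding hermitian_on_def by blast

lemma hermitian_on_cnj: "hermitian_on H I \<Longrightarrow> i \<in> I \<Longrightarrow> l \<in> I \<Longrightarrow> cnj (H i l) = H l i"
  unfolding hermitian_on_def by (metis complex_cnj_cnj)

lemma cnj_mult_self: "cnj x * x = complex_of_real ((cmod x)\<^sup>2)"
  by (metis complex_norm_square mult.commute)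

lemma hermitian_form_real:
  assumes "hermitian_on H I"
  shows "Im (\<Sum>i\<in>I. \<Sum>l\<in>I. cnj (w i) * (H i l * w l)) = 0"
proof -
  define Q where "Q = (\<Sum>i\<in>I. \<Sum>l\<in>I. cnj (w i) * (H i l * w l))"
  have "cnj Q = (\<Sum>i\<in>I. \<Sum>l\<in>I. w i * (cnj (H i l) * cnj (w l)))" unfolding Q_def by simp
  also have "\<dots> = (\<Sum>i\<in>I. \<Sum>l\<in>I. cnj (w l) * (H l i * w i))"
    using hermitian_on_cnj[OF assms] by (intro sum.cong refl) (simp add: ac_simps)
  also have "\<dots> = Q" unfolding Q_def by (rule sum.swap)
  finally have "Im (cnj Q) = Im Q" by simp
  then show ?thesis unfolding Q_def[symmetric] by simp
qed

lemma shifted_row_sum: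
  fixes H :: "nat \<Rightarrow> nat \<Rightarrow> complex"
  assumes "finite F" "i \<in> F"
  shows "(\<Sum>l\<in>F. (H i l - (if i = l then z else 0)) * w l) = (\<Sum>l\<in>F. H i l * w l) - z * w i"
proof -
  have "(\<Sum>l\<in>F. (H i l - (if i = l then z else 0)) * w l)
      = (\<Sum>l\<in>F. H i l * w l - (if i = l then z * w l else 0))"
    by (intro sum.cong refl) (auto simp: left_diff_distrib)
  also have "\<dots> = (\<Sum>l\<in>F. H i l * w l) - z * w i" using assms by (simp add: sum_subtractf)
  finally show ?thesis .
qed

lemma resolvent_apply:
  assumes "is_resolvent_on H F z G" "i \<in> F" "finite F"
  shows "(\<Sum>l\<in>F. (H i l - (if i = l then z else 0)) * (\<Sum>m\<in>F. G l m * x m)) = x i"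
proof -
  have "(\<Sum>l\<in>F. (H i l - (if i = l then z else 0)) * (\<Sum>m\<in>F. G l m * x m))
      = (\<Sum>m\<in>F. (\<Sum>l\<in>F. (H i l - (if i = l then z else 0)) * G l m) * x m)"
    by (simp add: sum_distrib_left sum_distrib_right mult.assoc) (rule sum.swap)
  also have "\<dots> = (\<Sum>m\<in>F. if i = m then x m else 0)"
    using assms(1,2) unfolding is_resolvent_on_def by (intro sum.cong refl) auto
  also have "\<dots> = x i" using assms(2,3) by simp
  finally show ?thesis .
qed

(* If (H - z) w = v then Im <w, v> = - Im z |w|^2: the basic identity behind
   uniqueness of the resolvent and positivity of Im G. *)
lemma hermitian_eigen_Im:
  assumes fin: "finite I" and h: "hermitian_on H I"
    and w: "\<And>i. i \<in> I \<Longrightarrow> (\<Sum>l\<in>I. H i l * w l) - z * w i = v i"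
  shows "Im (\<Sum>i\<in>I. cnj (w i) * v i) = - Im z * (\<Sum>i\<in>I. (cmod (w i))\<^sup>2)"
proof -
  have "(\<Sum>i\<in>I. cnj (w i) * v i) = (\<Sum>i\<in>I. cnj (w i) * ((\<Sum>l\<in>I. H i l * w l) - z * w i))"
    using w by simp
  also have "\<dots> = (\<Sum>i\<in>I. \<Sum>l\<in>I. cnj (w i) * (H i l * w l)) - z * (\<Sum>i\<in>I. cnj (w i) * w i)"
    by (simp only: right_diff_distrib sum_subtractf sum_distrib_left mult.left_commute)
  also have "(\<Sum>i\<in>I. cnj (w i) * w i) = complex_of_real (\<Sum>i\<in>I. (cmod (w i))\<^sup>2)"
    by (simp add: cnj_mult_self)
  finally show ?thesis using hermitian_form_real[OF h, of w] by simp
qed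

(* Uniqueness: the difference of two resolvents is killed by H - z. *)
lemma resolvent_unique:
  assumes fin: "finite I" and h: "hermitian_on H I" and iz: "Im z > 0"
    and G1: "is_resolvent_on H I z G1" and G2: "is_resolvent_on H I z G2"
  shows "G1 = G2"
proof (intro ext)
  fix a k
  show "G1 a k = G2 a k"
  proof (cases "a \<in> I \<and> k \<in> I")
    case False
    then show ?thesis using G1 G2 unfolding is_resolvent_on_def by auto
  next
    case True
    define w where "w l = G1 l k - G2 l k" for l
    have "(\<Sum>l\<in>I. H i l * w l) - z * w i = 0" if "i \<in> I" for i
    proof -
      have "(\<Sum>l\<in>I. (H i l - (if i = l then z else 0)) * w l)
          = (\<Sum>l\<in>I. (H i l - (if i = l then z else 0)) * G1 l k)
          - (\<Sum>l\<in>I. (H i l - (if i = l then z else 0)) * G2 l k)"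
        unfolding w_def by (simp only: right_diff_distrib sum_subtractf)
      also have "\<dots> = 0" using G1 G2 True that unfolding is_resolvent_on_def by simp
      finally show ?thesis using shifted_row_sum[OF fin that, of H z w] by simp
    qed
    from hermitian_eigen_Im[OF fin h this]
    have "Im z * (\<Sum>i\<in>I. (cmod (w i))\<^sup>2) = 0" by simp
    then have "(\<Sum>i\<in>I. (cmod (w i))\<^sup>2) = 0" using iz by simp
    then have "w a = 0" using fin True sum_nonneg_eq_0_iff[of I "\<lambda>i. (cmod (w i))\<^sup>2"] by auto
    then show ?thesis unfolding w_def by simp
  qed
qed

lemma resolvent_form_Im_nonneg:
  assumes fin: "finite I" and h: "hermitian_on H I" and iz: "Im z > 0"
    and G: "is_resolvent_on H I z G"
  shows "Im (\<Sum>k\<in>I. \<Sum>l\<in>I. cnj (v k) * G k l * v l) \<ge> 0"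
proof -
  define w where "w k = (\<Sum>l\<in>I. G k l * v l)" for k
  have Hw: "(\<Sum>l\<in>I. H k l * w l) - z * w k = v k" if "k \<in> I" for k
    using resolvent_apply[OF G that fin, of v] shifted_row_sum[OF fin that, of H z w]
    unfolding w_def by simp
  have "(\<Sum>k\<in>I. \<Sum>l\<in>I. cnj (v k) * G k l * v l) = (\<Sum>k\<in>I. cnj (v k) * w k)"
    unfolding w_def by (simp add: sum_distrib_left mult.assoc)
  also have "\<dots> = cnj (\<Sum>k\<in>I. cnj (w k) * v k)" by (simp add: mult.commute)
  finally have form_eq: "(\<Sum>k\<in>I. \<Sum>l\<in>I. cnj (v k) * G k l * v l) = cnj (\<Sum>k\<in>I. cnj (w k) * v k)" .
  have Im_cnj: "Im (cnj Y) = - Im Y" for Y by simp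
  have "Im (\<Sum>k\<in>I. \<Sum>l\<in>I. cnj (v k) * G k l * v l) = Im z * (\<Sum>k\<in>I. (cmod (w k))\<^sup>2)"
    using hermitian_eigen_Im[OF fin h Hw] unfolding form_eq Im_cnj by (simp del: Im_sum)
  also have "\<dots> \<ge> 0" using iz by (simp add: sum_nonneg)
  finally show ?thesis .
qed

(* Schur complement data for adding the index j to F, given the resolvent G of
   the minor on F: the vectors G a_j and a_j^* G, the denominator
   H_jj - z - a_j^* G a_j, and the resulting candidate resolvent on F + {j}. *)
definition schur_col :: "(nat \<Rightarrow> nat \<Rightarrow> complex) \<Rightarrow> nat set \<Rightarrow> nat \<Rightarrow> (nat \<Rightarrow> nat \<Rightarrow> complex) \<Rightarrow> nat \<Rightarrow> complex" where
  "schur_col H F j G k = (\<Sum>l\<in>F. G k l * H l j)"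

definition schur_row :: "(nat \<Rightarrow> nat \<Rightarrow> complex) \<Rightarrow> nat set \<Rightarrow> nat \<Rightarrow> (nat \<Rightarrow> nat \<Rightarrow> complex) \<Rightarrow> nat \<Rightarrow> complex" where
  "schur_row H F j G k = (\<Sum>l\<in>F. H j l * G l k)"

definition schur_denom :: "(nat \<Rightarrow> nat \<Rightarrow> complex) \<Rightarrow> nat set \<Rightarrow> complex \<Rightarrow> nat \<Rightarrow> (nat \<Rightarrow> nat \<Rightarrow> complex) \<Rightarrow> complex" where
  "schur_denom H F z j G = H j j - z - (\<Sum>k\<in>F. \<Sum>l\<in>F. H j k * G k l * H l j)"

definition schur_resolvent :: "(nat \<Rightarrow> nat \<Rightarrow> complex) \<Rightarrow> nat set \<Rightarrow> complex \<Rightarrow> nat \<Rightarrow> (nat \<Rightarrow> nat \<Rightarrow> complex) \<Rightarrow> nat \<Rightarrow> nat \<Rightarrow> complex" where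
  "schur_resolvent H F z j G i k =
     (let d = schur_denom H F z j G in
      if i \<in> insert j F \<and> k \<in> insert j F then
        (if i = j \<and> k = j then 1 / d
         else if i = j then - (1 / d) * schur_row H F j G k
         else if k = j then - (1 / d) * schur_col H F j G i
         else G i k + (1 / d) * schur_col H F j G i * schur_row H F j G k)
      else 0)"

lemma schur_denom_Im:
  assumes fin: "finite F" and h: "hermitian_on H (insert j F)" and iz: "Im z > 0"
    and G: "is_resolvent_on H F z G"
  shows "Im (schur_denom H F z j G) \<le> - Im z"
proof -
  have hF: "hermitian_on H F" using hermitian_on_subset[OF h] by blast
  have "(\<Sum>k\<in>F. \<Sum>l\<in>F. H j k * G k l * H l j) = (\<Sum>k\<in>F. \<Sum>l\<in>F. cnj (H k j) * G k l * H l j)"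
    using hermitian_on_cnj[OF h] by (intro sum.cong refl) auto
  moreover have "Im (\<Sum>k\<in>F. \<Sum>l\<in>F. cnj (H k j) * G k l * H l j) \<ge> 0"
    by (rule resolvent_form_Im_nonneg[OF fin hF iz G])
  moreover have "Im (H j j) = 0"
    using hermitian_on_cnj[OF h, of j j] by (metis Reals_cnj_iff complex_is_Real_iff insertI1)
  ultimately show ?thesis unfolding schur_denom_def by simp
qed

(* The Schur complement formula is pure linear algebra: it only needs the
   denominator to be nonzero.  We verify the resolvent equations row by row. *)
context
  fixes H G :: "nat \<Rightarrow> nat \<Rightarrow> complex" and F :: "nat set" and z :: complex and j :: nat
  assumes fin: "finite F" and jF: "j \<notin> F" and G: "is_resolvent_on H F z G"
    and d_nz: "schur_denom H F z j G \<noteq> 0"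
begin

lemma schur_resolvent_entries:
  defines "d \<equiv> schur_denom H F z j G" and "c \<equiv> schur_col H F j G" and "r \<equiv> schur_row H F j G"
  shows "schur_resolvent H F z j G j j = 1 / d"
    and "k \<in> F \<Longrightarrow> schur_resolvent H F z j G j k = - (1 / d) * r k"
    and "k \<in> F \<Longrightarrow> schur_resolvent H F z j G k j = - (1 / d) * c k"
    and "i \<in> F \<Longrightarrow> k \<in> F \<Longrightarrow> schur_resolvent H F z j G i k = G i k + (1 / d) * c i * r k"
  using jF unfolding schur_resolvent_def d_def c_def r_def Let_def by auto

lemma schur_row_j:
  assumes k: "k \<in> insert j F"
  shows "(\<Sum>l\<in>insert j F. (H j l - (if j = l then z else 0)) * schur_resolvent H F z j G l k)
         = (if j = k then 1 else 0)"
proof -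
  define d where "d = schur_denom H F z j G"
  define S where "S = (\<Sum>k\<in>F. \<Sum>l\<in>F. H j k * G k l * H l j)"
  note E = schur_resolvent_entries[folded d_def]
  have dS: "(1 / d) * (H j j - z - S) = 1" using d_nz unfolding d_def S_def schur_denom_def by simp
  have Sc: "(\<Sum>l\<in>F. H j l * schur_col H F j G l) = S"
    unfolding schur_col_def S_def by (simp add: sum_distrib_left mult.assoc)
  have off: "(H j l - (if j = l then z else 0)) = H j l" if "l \<in> F" for l using that jF by auto
  have split: "(\<Sum>l\<in>insert j F. (H j l - (if j = l then z else 0)) * schur_resolvent H F z j G l k)
     = (H j j - z) * schur_resolvent H F z j G j k + (\<Sum>l\<in>F. H j l * schur_resolvent H F z j G l k)"
    using fin jF off by simp
  consider "k = j" | "k \<in> F" using k by auto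
  then show ?thesis
  proof cases
    case 1
    have sumF: "(\<Sum>l\<in>F. H j l * schur_resolvent H F z j G l j) = - (1 / d) * S"
      unfolding Sc[symmetric] sum_distrib_left using E(3) by (intro sum.cong refl) simp
    have "(\<Sum>l\<in>insert j F. (H j l - (if j = l then z else 0)) * schur_resolvent H F z j G l k)
        = (H j j - z) * (1 / d) + - (1 / d) * S"
      unfolding 1 split[unfolded 1] sumF E(1) ..
    also have "\<dots> = (1 / d) * (H j j - z - S)" by (simp add: algebra_simps add_divide_distrib)
    finally show ?thesis using dS 1 by simp
  next
    case 2
    define r where "r = schur_row H F j G k"
    have sumF: "(\<Sum>l\<in>F. H j l * schur_resolvent H F z j G l k) = r + (1 / d) * r * S"
      unfolding Sc[symmetric] using E(4)[OF _ 2]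
      by (simp add: sum.distrib sum_distrib_left algebra_simps r_def schur_row_def)
    have "(\<Sum>l\<in>insert j F. (H j l - (if j = l then z else 0)) * schur_resolvent H F z j G l k)
        = (H j j - z) * (- (1 / d) * r) + (r + (1 / d) * r * S)"
      unfolding split sumF E(2)[OF 2, folded r_def] ..
    also have "\<dots> = r * (1 - (1 / d) * (H j j - z - S))"
      by (simp add: algebra_simps add_divide_distrib diff_divide_distrib)
    finally show ?thesis using dS 2 jF by auto
  qed
qed

lemma schur_row_F:
  assumes i: "i \<in> F" and k: "k \<in> insert j F"
  shows "(\<Sum>l\<in>insert j F. (H i l - (if i = l then z else 0)) * schur_resolvent H F z j G l k)
         = (if i = k then 1 else 0)"
proof -
  define d where "d = schur_denom H F z j G"
  define M where "M l = H i l - (if i = l then z else 0)" for l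
  note E = schur_resolvent_entries[folded d_def]
  have Mc: "(\<Sum>l\<in>F. M l * schur_col H F j G l) = H i j"
    unfolding M_def schur_col_def using resolvent_apply[OF G i fin, of "\<lambda>m. H m j"] .
  have MG: "(\<Sum>l\<in>F. M l * G l k) = (if i = k then 1 else 0)" if "k \<in> F" for k
    using G i that unfolding is_resolvent_on_def M_def by auto
  have split: "(\<Sum>l\<in>insert j F. M l * schur_resolvent H F z j G l k)
     = H i j * schur_resolvent H F z j G j k + (\<Sum>l\<in>F. M l * schur_resolvent H F z j G l k)"
    using fin jF i by (auto simp: M_def)
  consider "k = j" | "k \<in> F" using k by auto
  then have "(\<Sum>l\<in>insert j F. M l * schur_resolvent H F z j G l k) = (if i = k then 1 else 0)"
  proof cases
    case 1
    have "(\<Sum>l\<in>F. M l * schur_resolvent H F z j G l j) = - (1 / d) * H i j"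
      unfolding Mc[symmetric] sum_distrib_left using E(3) by (intro sum.cong refl) simp
    then show ?thesis unfolding 1 split[unfolded 1] E(1) using i jF by auto
  next
    case 2
    define r where "r = schur_row H F j G k"
    have "(\<Sum>l\<in>F. M l * schur_resolvent H F z j G l k) = (if i = k then 1 else 0) + (1 / d) * r * H i j"
      unfolding Mc[symmetric] MG[OF 2, symmetric] using E(4)[OF _ 2]
      by (simp add: sum.distrib sum_distrib_left algebra_simps r_def)
    then show ?thesis unfolding split E(2)[OF 2, folded r_def] by simp
  qed
  then show ?thesis unfolding M_def .
qed

end

lemma schur_resolvent_is_resolvent:
  assumes fin: "finite F" and jF: "j \<notin> F" and h: "hermitian_on H (insert j F)" and iz: "Im z > 0"
    and G: "is_resolvent_on H F z G"
  shows "is_resolvent_on H (insert j F) z (schur_resolvent H F z j G)"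
proof -
  have "schur_denom H F z j G \<noteq> 0" using schur_denom_Im[OF fin h iz G] iz by auto
  note rows = schur_row_j[OF fin jF G this] schur_row_F[OF fin jF G this]
  show ?thesis unfolding is_resolvent_on_def
  proof (intro conjI ballI allI impI)
    fix i k assume "i \<in> insert j F" "k \<in> insert j F"
    then show "(\<Sum>l\<in>insert j F. (H i l - (if i = l then z else 0)) * schur_resolvent H F z j G l k)
               = (if i = k then 1 else 0)"
      using rows by blast
  next
    fix i k assume "i \<notin> insert j F \<or> k \<notin> insert j F"
    then show "schur_resolvent H F z j G i k = 0" unfolding schur_resolvent_def Let_def by auto
  qed
qed

lemma resolvent_exists:
  assumes "finite I" "hermitian_on H I" "Im z > 0"
  shows "\<exists>G. is_resolvent_on H I z G"
  using assms
proof (induction I rule: finite_induct)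
  case empty
  show ?case by (rule exI[of _ "\<lambda>_ _. 0"]) (simp add: is_resolvent_on_def)
next
  case (insert j F)
  then obtain G where "is_resolvent_on H F z G" using hermitian_on_subset[of H "insert j F" F] by blast
  then show ?case using schur_resolvent_is_resolvent[OF insert(1,2,4,5)] by blast
qed

lemma resolvent_on_is_resolvent:
  assumes "finite I" "hermitian_on H I" "Im z > 0"
  shows "is_resolvent_on H I z (resolvent_on H I z)"
proof -
  have "\<exists>!G. is_resolvent_on H I z G" using resolvent_exists[OF assms] resolvent_unique[OF assms] by blast
  then show ?thesis unfolding resolvent_on_eq_The by (rule theI')
qed

lemma res_eq_schur_resolvent:
  assumes h: "hermitian_mat N H" and iz: "Im z > 0" and jN: "j < N"
  shows "res N H z = schur_resolvent H ({..<N} - {j}) z j (res_minor N H j z)"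
    and "is_resolvent_on H ({..<N} - {j}) z (res_minor N H j z)"
proof -
  define I where "I = {..<N} - {j}"
  have hN: "hermitian_on H {..<N}" using hermitian_mat_imp_hermitian_on[OF h] .
  have ins: "insert j I = {..<N}" unfolding I_def using jN by auto
  have hI: "hermitian_on H I" by (rule hermitian_on_subset[OF hN]) (auto simp: I_def)
  show minor: "is_resolvent_on H ({..<N} - {j}) z (res_minor N H j z)"
    unfolding res_minor_def by (rule resolvent_on_is_resolvent[OF _ hI[unfolded I_def] iz]) simp
  have "is_resolvent_on H (insert j I) z (schur_resolvent H I z j (res_minor N H j z))"
    by (rule schur_resolvent_is_resolvent[OF _ _ _ iz minor[folded I_def]])
       (use hN ins in \<open>simp_all add: I_def\<close>)
  then have schur: "is_resolvent_on H {..<N} z (schur_resolvent H I z j (res_minor N H j z))"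
    unfolding ins .
  have "is_resolvent_on H {..<N} z (res N H z)"
    unfolding res_def by (rule resolvent_on_is_resolvent[OF _ hN iz]) simp
  from resolvent_unique[OF _ hN iz this schur]
  show "res N H z = schur_resolvent H ({..<N} - {j}) z j (res_minor N H j z)"
    unfolding I_def by simp
qed

lemma res_diag:
  assumes h: "hermitian_mat N H" and iz: "Im z > 0" and jN: "j < N"
  shows "res N H z j j = 1 / schur_denom H ({..<N} - {j}) z j (res_minor N H j z)"
    and "Im (res N H z j j) > 0"
proof -
  define d where "d = schur_denom H ({..<N} - {j}) z j (res_minor N H j z)"
  show G_jj: "res N H z j j = 1 / d"
    unfolding res_eq_schur_resolvent(1)[OF assms] d_def schur_resolvent_def Let_def using jN by simp
  have "hermitian_on H (insert j ({..<N} - {j}))"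
    using hermitian_mat_imp_hermitian_on[OF h] jN by (simp add: insert_absorb)
  then have "Im d \<le> - Im z"
    unfolding d_def using schur_denom_Im res_eq_schur_resolvent(2)[OF assms] iz by blast
  then have "Im d < 0" "d \<noteq> 0" using iz by auto
  then have "Im (1 / d) > 0" by (simp add: Im_divide' divide_neg_pos)
  then show "Im (res N H z j j) > 0" using G_jj by simp
qed

(* The error term is Upsilon_j = -z - 1/G_jj - m: the correction
   (1/G_jj)(1/N) sum_k G_jk G_kj equals m - (1/N) tr G^(j) by the rank-one update
   G_kk - G^(j)_kk = G_jk G_kj / G_jj. *)
lemma Upsilon_eq:
  assumes h: "hermitian_mat N H" and iz: "Im z > 0" and jN: "j < N"
  shows "Upsilon N H z j = - z - 1 / res N H z j j - stieltjes N H z"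
proof -
  define I where "I = {..<N} - {j}"
  define Gm where "Gm = res_minor N H j z"
  define G where "G = res N H z"
  define S where "S = (\<Sum>k\<in>I. \<Sum>l\<in>I. H j k * Gm k l * H l j)"
  have ins: "{..<N} = insert j I" and jI: "j \<notin> I" and finI: "finite I"
    unfolding I_def using jN by auto
  have G_schur: "G = schur_resolvent H I z j Gm"
    unfolding G_def Gm_def I_def by (rule res_eq_schur_resolvent(1)[OF assms])
  have G_jj: "1 / G j j = H j j - z - S"
    using res_diag(1)[OF assms] unfolding G_def Gm_def I_def S_def schur_denom_def by simp
  have G_nz: "G j j \<noteq> 0" using res_diag(2)[OF assms] unfolding G_def by auto
  have diag_update: "G j k * G k j = G j j * (G k k - Gm k k)" if "k \<in> I" for k
  proof -
    have "k \<noteq> j" using that jI by auto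
    then show ?thesis using that G_nz unfolding G_schur schur_resolvent_def Let_def
      by (simp add: field_simps)
  qed
  have sum_GG: "(\<Sum>k<N. G j k * G k j) = G j j * ((\<Sum>k<N. G k k) - (\<Sum>k\<in>I. Gm k k))"
  proof -
    have "(\<Sum>k<N. G j k * G k j) = G j j * G j j + (\<Sum>k\<in>I. G j j * (G k k - Gm k k))"
      unfolding ins using jI finI diag_update by simp
    also have "\<dots> = G j j * ((G j j + (\<Sum>k\<in>I. G k k)) - (\<Sum>k\<in>I. Gm k k))"
      by (simp add: sum_subtractf sum_distrib_left algebra_simps)
    also have "G j j + (\<Sum>k\<in>I. G k k) = (\<Sum>k<N. G k k)"
      unfolding ins using jI finI by simp
    finally show ?thesis .
  qed
  have "Upsilon N H z j = - H j j - (1 / G j j) * ((1 / of_nat N) * (\<Sum>k<N. G j k * G k j))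
      + S - (1 / of_nat N) * (\<Sum>k\<in>I. Gm k k)"
    unfolding Upsilon_def G_def Gm_def I_def S_def ..
  also have "\<dots> = - H j j + S - stieltjes N H z"
  proof -
    have "stieltjes N H z = (1 / of_nat N) * (\<Sum>k<N. G k k)" unfolding stieltjes_def G_def ..
    moreover have "of_nat N \<noteq> (0::complex)" using jN by simp
    ultimately show ?thesis unfolding sum_GG using G_nz by (simp add: field_simps)
  qed
  also have "\<dots> = - z - 1 / G j j - stieltjes N H z" unfolding G_jj by simp
  finally show ?thesis unfolding G_def .
qed

lemma R_err_eq:
  assumes h: "hermitian_mat N H" and iz: "Im z > 0" and N1: "N \<ge> 1"
  shows "R_err N H z = - ((stieltjes N H z)\<^sup>2 + z * stieltjes N H z + 1)"
proof -
  define m where "m = stieltjes N H z"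
  define G where "G = res N H z"
  have N_nz: "of_nat N \<noteq> (0::complex)" using N1 by simp
  have trace: "(\<Sum>j<N. G j j) = of_nat N * m"
    unfolding m_def stieltjes_def G_def using N_nz by simp
  have "(\<Sum>j<N. Upsilon N H z j * G j j) = (\<Sum>j<N. - (z + m) * G j j - 1)"
  proof (intro sum.cong refl)
    fix j assume "j \<in> {..<N}"
    then have U: "Upsilon N H z j = - z - 1 / G j j - m" and nz: "G j j \<noteq> 0"
      using Upsilon_eq[OF h iz] res_diag(2)[OF h iz] unfolding G_def m_def by fastforce+
    show "Upsilon N H z j * G j j = - (z + m) * G j j - 1" unfolding U using nz by (simp add: field_simps)
  qed
  also have "\<dots> = - (z + m) * (of_nat N * m) - of_nat N"
    by (simp add: sum_subtractf sum_distrib_left trace[symmetric])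
  finally have "R_err N H z = (1 / of_nat N) * (- (z + m) * (of_nat N * m) - of_nat N)"
    unfolding R_err_def G_def by simp
  also have "\<dots> = - (m\<^sup>2 + z * m + 1)" using N_nz by (simp add: field_simps power2_eq_square)
  finally show ?thesis unfolding m_def .
qed

lemma Im_stieltjes_pos:
  assumes h: "hermitian_mat N H" and iz: "Im z > 0" and N1: "N \<ge> 1"
  shows "Im (stieltjes N H z) > 0"
proof -
  have "(\<Sum>j<N. Im (res N H z j j)) > 0"
    using res_diag(2)[OF h iz] N1 by (intro sum_pos) (auto simp: lessThan_empty_iff)
  moreover have "Im (stieltjes N H z) = (1 / real N) * (\<Sum>j<N. Im (res N H z j j))"
    unfolding stieltjes_def by (simp add: Im_sum)
  ultimately show ?thesis using N1 by simp
qed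

lemma quadratic_le_bound:
  fixes p \<sigma> :: real
  assumes "\<sigma> > 0" and "p\<^sup>2 \<le> 2 * \<sigma>\<^sup>2 + 2 * \<sigma> * p"
  shows "p \<le> 3 * \<sigma>"
proof (rule ccontr)
  assume "\<not> p \<le> 3 * \<sigma>"
  then have gt: "p > 3 * \<sigma>" by simp
  then have "3 * \<sigma> * p < p * p" using assms(1) by (intro mult_strict_right_mono) auto
  moreover have "3 * \<sigma> * (3 * \<sigma>) < 3 * \<sigma> * p" using gt assms(1) by (intro mult_strict_left_mono) auto
  moreover have "\<sigma> * \<sigma> > 0" using assms(1) by simp
  ultimately show False using assms(2) by (simp add: power2_eq_square algebra_simps)
qed

(* Real form of the bulk condition for s = x + i y, with a = |x| and rho = |s|^2:
   it forces |x| (1 - |s|^2) <= 6 Im s. *)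
lemma unit_disc_edge_estimate:
  fixes a y \<rho> :: real
  assumes a0: "a \<ge> 0" and y0: "y > 0" and rho: "\<rho> = a\<^sup>2 + y\<^sup>2" and rho1: "\<rho> < 1"
    and cond: "a * (1 + \<rho>) \<le> 2 * \<rho> + y * (1 - \<rho>)"
  shows "a * (1 - \<rho>) \<le> 6 * y"
proof -
  define r where "r = sqrt \<rho>"
  have rho0: "\<rho> > 0" using rho y0 by (simp add: add_nonneg_pos)
  have r0: "r > 0" and rr: "r\<^sup>2 = \<rho>" and r1: "r < 1" unfolding r_def using rho0 rho1 by auto
  define c where "c = a / r"
  define \<sigma> where "\<sigma> = y / r"
  have a_eq: "a = c * r" and y_eq: "y = \<sigma> * r" unfolding c_def \<sigma>_def using r0 by auto
  have cs: "c\<^sup>2 + \<sigma>\<^sup>2 = 1"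
    unfolding c_def \<sigma>_def using rr rho y0 by (simp add: power_divide flip: add_divide_distrib)
  have c0: "c \<ge> 0" and s0: "\<sigma> > 0" unfolding c_def \<sigma>_def using a0 y0 r0 by auto
  have "c\<^sup>2 \<le> 1" using cs by (smt (verit) zero_le_power2)
  then have c1: "c \<le> 1" using c0 by (simp add: abs_square_le_1)
  have "c\<^sup>2 \<le> c" using mult_left_mono[OF c1 c0] by (simp add: power2_eq_square)
  then have c_ge: "1 - \<sigma>\<^sup>2 \<le> c" using cs by simp
  have "r * (c * (1 + r\<^sup>2)) \<le> r * (2 * r + \<sigma> * (1 - r\<^sup>2))"
    using cond unfolding a_eq y_eq rr[symmetric] by (simp add: power2_eq_square algebra_simps)
  then have cond': "c * (1 + r\<^sup>2) \<le> 2 * r + \<sigma> * (1 - r\<^sup>2)" using r0 by simp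
  have "(1 - \<sigma>\<^sup>2) * (1 + r\<^sup>2) \<le> c * (1 + r\<^sup>2)" using c_ge by (simp add: mult_right_mono)
  then have "(1 - r)\<^sup>2 \<le> \<sigma>\<^sup>2 * (1 + r\<^sup>2) + \<sigma> * (1 - r\<^sup>2)" using cond'
    by (simp add: power2_eq_square algebra_simps)
  moreover have "\<sigma>\<^sup>2 * (1 + r\<^sup>2) \<le> \<sigma>\<^sup>2 * 2" using r1 r0
    by (intro mult_left_mono) (auto simp: power2_eq_square mult_le_one)
  moreover have "\<sigma> * (1 - r\<^sup>2) \<le> \<sigma> * (2 * (1 - r))"
  proof (rule mult_left_mono)
    have "0 \<le> (1 - r) * (1 - r)" by simp
    then show "1 - r\<^sup>2 \<le> 2 * (1 - r)" by (simp add: power2_eq_square algebra_simps)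
  qed (use s0 in simp)
  ultimately have "(1 - r)\<^sup>2 \<le> 2 * \<sigma>\<^sup>2 + 2 * \<sigma> * (1 - r)" by (simp add: algebra_simps)
  then have dist: "1 - r \<le> 3 * \<sigma>" by (rule quadratic_le_bound[OF s0])
  have "a * (1 - \<rho>) = a * ((1 - r) * (1 + r))" using rr by (simp add: power2_eq_square algebra_simps)
  also have "\<dots> \<le> r * ((1 - r) * 2)"
    using a0 r1 by (intro mult_mono) (auto simp: a_eq c1 r0 mult_le_one less_imp_le)
  also have "\<dots> \<le> r * (3 * \<sigma> * 2)" using dist r0 by (intro mult_left_mono) auto
  also have "\<dots> = 6 * y" using y_eq by simp
  finally show ?thesis .
qed

lemma bulk_root_bound:
  fixes s z :: complex
  assumes root: "s\<^sup>2 + z * s + 1 = 0" and s1: "cmod s < 1" and ims: "Im s > 0"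
    and bulk: "\<bar>Re z\<bar> \<le> 2 + Im z"
  shows "cmod (2 * s + z) * (cmod s)\<^sup>2 \<le> 7 * Im s"
proof -
  define x where "x = Re s"
  define y where "y = Im s"
  define \<rho> where "\<rho> = (cmod s)\<^sup>2"
  have rho0: "\<rho> > 0" and rho1: "\<rho> < 1" and y0: "y > 0"
    unfolding \<rho>_def y_def using ims s1 by (auto simp: abs_square_less_1)
  have rho_eq: "\<rho> = x\<^sup>2 + y\<^sup>2" unfolding \<rho>_def x_def y_def by (rule cmod_power2)
  note geo = root_geometry[OF root, folded \<rho>_def x_def y_def]
  have Re_z: "Re z = - x * (1 + 1 / \<rho>)" and Im_z: "Im z = y * (1 / \<rho> - 1)"
    unfolding geo(1) using geo(3,4) by (simp_all add: x_def y_def algebra_simps)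
  have "\<bar>x\<bar> * (1 + 1 / \<rho>) \<le> 2 + y * (1 / \<rho> - 1)"
    using bulk rho0 unfolding Re_z Im_z by (simp add: abs_mult)
  then have "\<rho> * (\<bar>x\<bar> * (1 + 1 / \<rho>)) \<le> \<rho> * (2 + y * (1 / \<rho> - 1))"
    using rho0 by (intro mult_left_mono) auto
  moreover have "\<rho> * (\<bar>x\<bar> * (1 + 1 / \<rho>)) = \<bar>x\<bar> * (1 + \<rho>)"
    and "\<rho> * (2 + y * (1 / \<rho> - 1)) = 2 * \<rho> + y * (1 - \<rho>)"
    using rho0 by (simp_all add: field_simps)
  ultimately have "\<bar>x\<bar> * (1 + \<rho>) \<le> 2 * \<rho> + y * (1 - \<rho>)" by simp
  then have edge: "\<bar>x\<bar> * (1 - \<rho>) \<le> 6 * y"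
    using unit_disc_edge_estimate[of "\<bar>x\<bar>" y \<rho>] y0 rho1 rho_eq by simp
  have Re_b: "Re (2 * s + z) * \<rho> = - (x * (1 - \<rho>))" and Im_b: "Im (2 * s + z) * \<rho> = y * (1 + \<rho>)"
    unfolding geo(1) using geo(3,4) rho0 by (simp_all add: x_def y_def field_simps)
  have "\<bar>- (x * (1 - \<rho>))\<bar> \<le> \<bar>6 * y\<bar>" using edge y0 rho1 by (simp add: abs_mult)
  then have "(Re (2 * s + z) * \<rho>)\<^sup>2 \<le> (6 * y)\<^sup>2" unfolding Re_b abs_le_square_iff .
  moreover have "(Im (2 * s + z) * \<rho>)\<^sup>2 \<le> (2 * y)\<^sup>2"
    unfolding Im_b using y0 rho0 rho1 by (intro power_mono) auto
  moreover have "(cmod (2 * s + z) * \<rho>)\<^sup>2 = (Re (2 * s + z) * \<rho>)\<^sup>2 + (Im (2 * s + z) * \<rho>)\<^sup>2"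
    by (simp only: power_mult_distrib cmod_power2 distrib_right)
  moreover have "(6 * y)\<^sup>2 + (2 * y)\<^sup>2 \<le> (7 * y)\<^sup>2" by (simp add: power_mult_distrib)
  ultimately have "(cmod (2 * s + z) * \<rho>)\<^sup>2 \<le> (7 * y)\<^sup>2" by linarith
  then have "cmod (2 * s + z) * \<rho> \<le> 7 * y" by (rule power2_le_imp_le) (use y0 in simp)
  then show ?thesis unfolding \<rho>_def y_def .
qed

lemma le_sqrt_mult:
  fixes x a b :: real
  assumes "0 \<le> x" "x \<le> a" "x \<le> b"
  shows "x \<le> sqrt (a * b)"
proof (rule real_le_rsqrt)
  show "x\<^sup>2 \<le> a * b" using assms unfolding power2_eq_square by (intro mult_mono) auto
qed

lemma le_min_times_le_sum:
  fixes x a b c :: real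
  assumes "0 \<le> x" "x \<le> a" "x \<le> b" "c \<le> a + b"
  shows "x * c \<le> 2 * (a * b)"
proof -
  have "x * c \<le> x * a + x * b" using assms(1,4) by (metis distrib_left mult_left_mono)
  also have "\<dots> \<le> b * a + a * b" using assms by (intro add_mono mult_right_mono) auto
  finally show ?thesis by simp
qed

lemma le_scaled_quotient:
  fixes x c d e :: real
  assumes "x * d \<le> c * e" "0 < d" "0 \<le> e" "c \<le> 8"
  shows "x \<le> 8 * (e / d)"
proof -
  have "x * d \<le> 8 * e" using assms(1,3,4) mult_right_mono[OF assms(4,3)] by linarith
  then show ?thesis using assms(2) by (simp add: pos_le_divide_eq)
qed

lemma quadratic_stability:
  fixes s z m :: complex
  assumes root: "s\<^sup>2 + z * s + 1 = 0" and s1: "cmod s < 1" and ims: "Im s > 0" and imm: "Im m > 0"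
  defines "\<epsilon> \<equiv> cmod (m\<^sup>2 + z * m + 1)"
  shows "\<bar>Re z\<bar> \<le> 2 + Im z \<Longrightarrow> cmod (m - s) \<le> 8 * min (\<epsilon> / cmod (s\<^sup>2 - 1)) (sqrt \<epsilon>)"
    and "\<bar>Im (m - s)\<bar> \<le> 8 * min (\<epsilon> / cmod (s\<^sup>2 - 1)) (sqrt \<epsilon>)"
    and "min (cmod (m - s)) (cmod (m - s + 2 * s + z)) \<le> 8 * sqrt \<epsilon>"
proof -
  define b where "b = 2 * s + z"
  define l where "l = cmod (m - s)"
  define l' where "l' = cmod (m - s + b)"
  define q where "q = Im s / (cmod s)\<^sup>2"
  note geo = root_geometry[OF root]
  have s0: "0 < cmod s" using ims by auto
  have b0: "0 < cmod b"
  proof -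
    have "cmod (s\<^sup>2) < 1" using s1 by (simp add: norm_power abs_square_less_1)
    then have "s\<^sup>2 \<noteq> 1" by auto
    then show ?thesis using geo(2) unfolding b_def by auto
  qed
  have eps: "\<epsilon> = l * l'"
  proof -
    have "m\<^sup>2 + z * m + 1 = (m - s) * (m - s + b)"
      using root unfolding b_def power2_eq_square by algebra
    then show ?thesis unfolding \<epsilon>_def l_def l'_def by (simp add: norm_mult)
  qed
  have den: "cmod (s\<^sup>2 - 1) = cmod s * cmod b" unfolding geo(2) b_def by (simp add: norm_mult)
  \<comment> \<open>\<open>m - s + b = m - 1/s\<close> lies at height at least \<open>q \<ge> Im s\<close>.\<close>
  have Im_l': "Im (m - s + b) = Im m + q" unfolding b_def q_def geo(1) using geo(4) by simp
  have q_ge: "Im s \<le> q" unfolding q_def using ims s0 s1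
    by (simp add: field_simps power_le_one)
  have l'_Im: "Im m + q \<le> l'" using Im_l' abs_Im_le_cmod[of "m - s + b"] unfolding l'_def by linarith
  then have l'_ge: "q \<le> l'" using imm by linarith
  have iL_l: "\<bar>Im (m - s)\<bar> \<le> l" unfolding l_def by (rule abs_Im_le_cmod)
  have iL_l': "\<bar>Im (m - s)\<bar> \<le> l'" using l'_Im q_ge imm ims by (simp add: abs_le_iff)
  have tri: "cmod b \<le> l + l'" unfolding l_def l'_def using norm_triangle_ineq4[of "m - s + b" "m - s"] by simp
  have tri': "l \<le> l' + cmod b" unfolding l_def l'_def using norm_triangle_ineq4[of "m - s + b" b] by simp
  have l0: "0 \<le> l" and l'0: "0 \<le> l'" unfolding l_def l'_def by simp_all
  have sb_le: "cmod s * cmod b \<le> cmod b" using s1 b0 by simp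
  have sb_pos: "0 < cmod s * cmod b" using s0 b0 by simp
  show "min (cmod (m - s)) (cmod (m - s + 2 * s + z)) \<le> 8 * sqrt \<epsilon>"
  proof -
    have "min l l' \<le> sqrt (l * l')" using l0 l'0 by (intro le_sqrt_mult) auto
    also have "\<dots> \<le> 8 * sqrt (l * l')" using l0 l'0 by simp
    finally have bound: "min l l' \<le> 8 * sqrt (l * l')" .
    have shift: "cmod (m - s + 2 * s + z) = l'" unfolding l'_def b_def by (simp add: algebra_simps)
    show ?thesis unfolding shift eps l_def[symmetric] by (rule bound)
  qed
  show "\<bar>Im (m - s)\<bar> \<le> 8 * min (\<epsilon> / cmod (s\<^sup>2 - 1)) (sqrt \<epsilon>)"
  proof -
    have "\<bar>Im (m - s)\<bar> * (cmod s * cmod b) \<le> 2 * (l * l')"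
      using le_min_times_le_sum[OF _ iL_l iL_l' tri] sb_le
      by (smt (verit, best) abs_ge_zero mult_left_mono)
    then have "\<bar>Im (m - s)\<bar> \<le> 8 * (l * l' / (cmod s * cmod b))"
      using sb_pos l0 l'0 by (intro le_scaled_quotient) auto
    moreover have "\<bar>Im (m - s)\<bar> \<le> sqrt (l * l')" using le_sqrt_mult[OF _ iL_l iL_l'] by simp
    then have "\<bar>Im (m - s)\<bar> \<le> 8 * sqrt (l * l')" using l0 l'0 by simp
    ultimately show ?thesis unfolding eps den by simp
  qed
  assume "\<bar>Re z\<bar> \<le> 2 + Im z"
  then have "cmod b * (cmod s)\<^sup>2 \<le> 7 * Im s" unfolding b_def by (rule bulk_root_bound[OF root s1 ims])
  then have "cmod b \<le> 7 * q" unfolding q_def using s0 by (simp add: field_simps)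
  then have b_l': "cmod b \<le> 7 * l'" using l'_ge by simp
  have "l * (cmod s * cmod b) \<le> 7 * (l * l')"
    using mult_left_mono[OF order.trans[OF sb_le b_l'] l0] by simp
  then have "l \<le> 8 * (l * l' / (cmod s * cmod b))" using sb_pos l0 l'0 by (intro le_scaled_quotient) auto
  moreover have "l \<le> sqrt (l * (64 * l'))" using tri' b_l' l0 by (intro le_sqrt_mult) auto
  then have "l \<le> 8 * sqrt (l * l')" by (simp add: real_sqrt_mult)
  ultimately show "cmod (m - s) \<le> 8 * min (\<epsilon> / cmod (s\<^sup>2 - 1)) (sqrt \<epsilon>)"
    unfolding eps den l_def by simp
qed

theorem proposition2p2:
  shows "\<exists>C>0. \<forall>(N::nat) (H::nat \<Rightarrow> nat \<Rightarrow> complex) (z::complex).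
     N \<ge> 1 \<and> hermitian_mat N H \<and> Im z > 0 \<longrightarrow>
       (\<bar>Re z\<bar> \<le> 2 + Im z \<longrightarrow>
          cmod (Lambda N H z) \<le> C * min (cmod (R_err N H z) / cmod ((m_sc z)^2 - 1)) (sqrt (cmod (R_err N H z))))
     \<and> \<bar>Im (Lambda N H z)\<bar> \<le> C * min (cmod (R_err N H z) / cmod ((m_sc z)^2 - 1)) (sqrt (cmod (R_err N H z)))
     \<and> min (cmod (Lambda N H z)) (cmod (Lambda N H z + 2 * m_sc z + z)) \<le> C * sqrt (cmod (R_err N H z))"
proof (intro exI[of _ "8::real"] conjI allI impI)
  fix N :: nat and H :: "nat \<Rightarrow> nat \<Rightarrow> complex" and z :: complex
  assume "N \<ge> 1 \<and> hermitian_mat N H \<and> Im z > 0"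
  then have N1: "N \<ge> 1" and h: "hermitian_mat N H" and iz: "Im z > 0" by auto
  have R: "cmod (R_err N H z) = cmod ((stieltjes N H z)\<^sup>2 + z * stieltjes N H z + 1)"
    unfolding R_err_eq[OF h iz N1] by (rule norm_minus_cancel)
  have L: "Lambda N H z = stieltjes N H z - m_sc z" unfolding Lambda_def ..
  note stable = quadratic_stability[OF m_sc_props[OF iz] Im_stieltjes_pos[OF h iz N1], folded R L]
  show "\<bar>Re z\<bar> \<le> 2 + Im z \<Longrightarrow>
      cmod (Lambda N H z) \<le> 8 * min (cmod (R_err N H z) / cmod ((m_sc z)^2 - 1)) (sqrt (cmod (R_err N H z)))"
    by (rule stable(1))
  show "\<bar>Im (Lambda N H z)\<bar> \<le> 8 * min (cmod (R_err N H z) / cmod ((m_sc z)^2 - 1)) (sqrt (cmod (R_err N H z)))"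
    by (rule stable(2))
  show "min (cmod (Lambda N H z)) (cmod (Lambda N H z + 2 * m_sc z + z)) \<le> 8 * sqrt (cmod (R_err N H z))"
    by (rule stable(3))
qed (simp)

end
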